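(* Let $\mathbb{P}: M_2 \to M_2$ be the linear map $$\mathbb{P}\begin{pmatrix} x_{11} & x_{12} \\ x_{21} & x_{22}\end{pmatrix} = \begin{pmatrix} \frac{x_{11}+x_{22}}{2} & x_{12} \\ x_{21} & \frac{x_{11}+x_{22}}{2}\end{pmatrix},$$ and let $\mathbb{I}$ denote the identity map on $M_2$. Then the minimum eigenvalue of $(\mathbb{I}_A\otimes\mathbb{P}_B)(\sigma_{AB})$, minimized over all two-qubit density matrices $\sigma_{AB}$ on $\mathbb{C}^2\otimes\mathbb{C}^2$, equals $-\frac14$, and this minimum is attained for a maximally entangled state, e.g. $\frac{1}{\sqrt2}(|00\rangle+|11\rangle)$.
   Context: $M_2$ denotes the space of complex $2\times 2$ matrices; $\mathbb{I}_A\otimes\mathbb{P}_B$ denotes the map acting as the identity on the first qubit and as $\mathbb{P}$ on the second qubit. A two-qubit density matrix is a positive semidefinite trace-one operator on $\mathbb{C}^2\otimes\mathbb{C}^2$. *)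

theory Defs
  imports "Jordan_Normal_Form.Jordan_Normal_Form"
begin

definition Pmap :: "complex mat \<Rightarrow> complex mat" where
  "Pmap X = mat 2 2 (\<lambda>(i,j). if i = j then (X $$ (0,0) + X $$ (1,1)) / 2 else X $$ (i,j))"

text \<open>Two-qubit operators are 4x4 matrices in the basis |ab>, index 2a+b (a on A, b on B).
  The (a,a') block of the 4x4 matrix S, a 2x2 matrix acting on B.\<close>
definition block :: "complex mat \<Rightarrow> nat \<Rightarrow> nat \<Rightarrow> complex mat" where
  "block S a a' = mat 2 2 (\<lambda>(b,b'). S $$ (2*a+b, 2*a'+b'))"

definition id_tensor_P :: "complex mat \<Rightarrow> complex mat" where
  "id_tensor_P S = mat 4 4 (\<lambda>(i,j). Pmap (block S (i div 2) (j div 2)) $$ (i mod 2, j mod 2))"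

definition positive_semidef :: "complex mat \<Rightarrow> bool" where
  "positive_semidef S \<longleftrightarrow> S \<in> carrier_mat (dim_row S) (dim_row S) \<and>
     (\<forall>i < dim_row S. \<forall>j < dim_row S. S $$ (j,i) = cnj (S $$ (i,j))) \<and>
     (\<forall>v \<in> carrier_vec (dim_row S).
        0 \<le> Re (\<Sum>i < dim_row S. \<Sum>j < dim_row S. cnj (v $ i) * S $$ (i,j) * v $ j))"

definition density2 :: "complex mat \<Rightarrow> bool" where
  "density2 S \<longleftrightarrow> S \<in> carrier_mat 4 4 \<and> positive_semidef S \<and> (\<Sum>i < 4. S $$ (i,i)) = 1"

definition bell_vec :: "complex vec" where
  "bell_vec = vec 4 (\<lambda>i. if i = 0 \<or> i = 3 then complex_of_real (1 / sqrt 2) else 0)"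

definition bell_state :: "complex mat" where
  "bell_state = mat 4 4 (\<lambda>(i,j). bell_vec $ i * cnj (bell_vec $ j))"

end

theory Submission
  imports Defs
begin

(*
  P(X) = (X + sigma_x X^T sigma_x) / 2, so (I (x) P)(sigma) is the average of sigma and a unitary
  conjugate of its partial transpose.  The lower bound is certified by a sum-of-squares identity:
  for every vector u, u^* (I (x) P)(S) u + (tr S / 4) |u|^2 is a nonnegative combination of the
  values w^* S w at ten vectors w built from u.  For a state this is nonnegative, and at an
  eigenvector u it equals (l + 1/4) |u|^2, forcing l real and l >= -1/4.  The Bell state attains
  the bound at the eigenvector |00> - |11>.
*)

definition quad_form :: "complex mat \<Rightarrow> complex vec \<Rightarrow> complex" where
  "quad_form S v = (\<Sum>i<dim_row S. \<Sum>j<dim_row S. cnj (v $ i) * S $$ (i,j) * v $ j)"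

lemma mult_mat_vec_index_sum:
  assumes "A \<in> carrier_mat n n" "v \<in> carrier_vec n" "i < n"
  shows "(A *\<^sub>v v) $ i = (\<Sum>j<n. A $$ (i,j) * v $ j)"
  using assms by (simp add: scalar_prod_def lessThan_atLeast0)

lemma quad_form_eigenvector:
  assumes T: "T \<in> carrier_mat n n" and ev: "eigenvector T u l"
  shows "quad_form T u = l * (u \<bullet>c u)"
proof -
  have u: "u \<in> carrier_vec n" and Tu: "T *\<^sub>v u = l \<cdot>\<^sub>v u"
    using ev T unfolding eigenvector_def by auto
  have row: "(\<Sum>j<n. T $$ (i,j) * u $ j) = l * u $ i" if "i < n" for i
    using mult_mat_vec_index_sum[OF T u that] Tu u that by simp
  have "quad_form T u = (\<Sum>i<n. cnj (u $ i) * (\<Sum>j<n. T $$ (i,j) * u $ j))"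
    using T unfolding quad_form_def by (simp add: sum_distrib_left mult.assoc)
  also have "\<dots> = (\<Sum>i<n. l * (u $ i * cnj (u $ i)))"
    by (intro sum.cong refl) (simp add: row)
  also have "\<dots> = l * (u \<bullet>c u)"
    using u by (simp add: scalar_prod_def lessThan_atLeast0 sum_distrib_left)
  finally show ?thesis .
qed

lemma quad_form_real_if_hermitian:
  assumes herm: "\<forall>i<dim_row S. \<forall>j<dim_row S. S $$ (j,i) = cnj (S $$ (i,j))"
  shows "quad_form S v \<in> \<real>"
proof -
  let ?n = "dim_row S"
  have "cnj (quad_form S v) = (\<Sum>i<?n. \<Sum>j<?n. v $ i * S $$ (j,i) * cnj (v $ j))"
    unfolding quad_form_def cnj_sum
  proof (intro sum.cong refl)
    fix i j assume "i \<in> {..<?n}" "j \<in> {..<?n}"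
    then have "S $$ (j,i) = cnj (S $$ (i,j))" using herm by blast
    then show "cnj (cnj (v $ i) * S $$ (i,j) * v $ j) = v $ i * S $$ (j,i) * cnj (v $ j)" by simp
  qed
  also have "\<dots> = quad_form S v"
    unfolding quad_form_def by (subst sum.swap) (simp add: ac_simps)
  finally show ?thesis by (simp add: Reals_cnj_iff)
qed

lemma positive_semidef_iff_quad_form:
  "positive_semidef S \<longleftrightarrow> S \<in> carrier_mat (dim_row S) (dim_row S) \<and>
     (\<forall>i < dim_row S. \<forall>j < dim_row S. S $$ (j,i) = cnj (S $$ (i,j))) \<and>
     (\<forall>v \<in> carrier_vec (dim_row S). 0 \<le> Re (quad_form S v))"
  unfolding positive_semidef_def quad_form_def ..

lemma positive_semidef_quad_form_nonneg:
  assumes "positive_semidef S" "v \<in> carrier_vec (dim_row S)"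
  shows "0 \<le> quad_form S v"
proof -
  have "quad_form S v \<in> \<real>" "0 \<le> Re (quad_form S v)"
    using assms quad_form_real_if_hermitian[of S v] unfolding positive_semidef_iff_quad_form by blast+
  then show ?thesis by (simp add: less_eq_complex_def complex_is_Real_iff)
qed

lemma nonneg_if_mult_pos_nonneg:
  fixes x p :: complex
  assumes "0 \<le> x * p" "0 < p"
  shows "0 \<le> x"
  using assms by (auto simp: less_eq_complex_def less_complex_def zero_le_mult_iff)

lemma eigenvalue_ge_if_quad_form_ge:
  assumes T: "T \<in> carrier_mat n n" and ev: "eigenvalue T l"
    and bound: "\<And>u. u \<in> carrier_vec n \<Longrightarrow> - c * (u \<bullet>c u) \<le> quad_form T u"
  shows "- c \<le> l"
proof -
  obtain u where u: "eigenvector T u l" using ev unfolding eigenvalue_def by blast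
  then have "u \<in> carrier_vec n" "u \<noteq> 0\<^sub>v n" using T unfolding eigenvector_def by auto
  then have pos: "0 < u \<bullet>c u" by simp
  have "0 \<le> (l + c) * (u \<bullet>c u)"
    using bound[OF \<open>u \<in> carrier_vec n\<close>] quad_form_eigenvector[OF T u]
    by (simp add: less_eq_complex_def algebra_simps)
  then have "0 \<le> l + c" by (rule nonneg_if_mult_pos_nonneg[OF _ pos])
  then show ?thesis by (simp add: less_eq_complex_def)
qed

lemma id_tensor_P_entry:
  assumes "i < 4" "j < 4"
  shows "id_tensor_P S $$ (i,j) = (if i mod 2 = j mod 2
     then (S $$ (2 * (i div 2), 2 * (j div 2)) + S $$ (2 * (i div 2) + 1, 2 * (j div 2) + 1)) / 2
     else S $$ (i,j))"
  using assms unfolding id_tensor_P_def Pmap_def block_def by auto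

lemma id_tensor_P_carrier_mat: "id_tensor_P S \<in> carrier_mat 4 4"
  by (simp add: id_tensor_P_def)

lemma sum_lessThan_4: "(\<Sum>i<(4::nat). f i) = f 0 + f 1 + f 2 + f 3"
  by (simp add: eval_nat_numeral)

text \<open>The first term on the right is the contribution of S itself; the others bound the
  partial-transpose half, which is why conjugated coordinates of u appear.\<close>

lemma quad_form_id_tensor_P_plus_trace:
  fixes S :: "complex mat" and a b c d :: complex
  assumes S: "S \<in> carrier_mat 4 4"
  defines "u \<equiv> vec_of_list [a, b, c, d]"
  shows "quad_form (id_tensor_P S) u + (\<Sum>i<4. S $$ (i,i)) / 4 * (u \<bullet>c u) =
    1/2 * quad_form S u
    + 1/2 * quad_form S (vec_of_list [cnj b, cnj a, 0, 0])
    + 1/2 * quad_form S (vec_of_list [0, 0, cnj d, cnj c])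
    + 1/4 * quad_form S (vec_of_list [cnj d, cnj c, cnj b, cnj a])
    + 1/4 * (quad_form S (vec_of_list [c, -d, 0, 0]) + quad_form S (vec_of_list [-b, 0, -d, 0])
           + quad_form S (vec_of_list [-a, 0, 0, -d]) + quad_form S (vec_of_list [0, -b, -c, 0])
           + quad_form S (vec_of_list [0, -a, 0, -c]) + quad_form S (vec_of_list [0, 0, -a, b]))"
  using S unfolding quad_form_def u_def
  by (simp add: id_tensor_P_carrier_mat[THEN carrier_matD(1)] sum_lessThan_4 id_tensor_P_entry
      scalar_prod_def lessThan_atLeast0[symmetric] vec_of_list_index del: vec_of_list_Cons)
    (simp add: field_simps)

lemma quad_form_id_tensor_P_ge:
  assumes psd: "positive_semidef S" and S: "S \<in> carrier_mat 4 4" and u: "u \<in> carrier_vec 4"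
  shows "- ((\<Sum>i<4. S $$ (i,i)) / 4) * (u \<bullet>c u) \<le> quad_form (id_tensor_P S) u"
proof -
  have nonneg: "0 \<le> quad_form S (vec_of_list [a, b, c, d])" for a b c d
    by (rule positive_semidef_quad_form_nonneg[OF psd], rule carrier_vecI) (use S in simp)
  have "u = vec_of_list [u $ 0, u $ 1, u $ 2, u $ 3]"
    using u by (intro eq_vecI) (auto simp: vec_of_list_index less_Suc_eq numeral_eq_Suc)
  then obtain a b c d where u_list: "u = vec_of_list [a, b, c, d]" by blast
  have "0 \<le> quad_form (id_tensor_P S) u + (\<Sum>i<4. S $$ (i,i)) / 4 * (u \<bullet>c u)"
    unfolding u_list quad_form_id_tensor_P_plus_trace[OF S]
    by (intro add_nonneg_nonneg mult_nonneg_nonneg nonneg) (simp_all add: less_eq_complex_def)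
  then show ?thesis by (simp add: less_eq_complex_def)
qed

lemma density2_id_tensor_P_eigenvalue_ge:
  assumes "density2 \<sigma>" and "eigenvalue (id_tensor_P \<sigma>) l"
  shows "- 1 / 4 \<le> l"
proof -
  have "- (1 / 4) \<le> l"
  proof (rule eigenvalue_ge_if_quad_form_ge[OF id_tensor_P_carrier_mat assms(2)])
    fix u :: "complex vec" assume "u \<in> carrier_vec 4"
    then show "- (1 / 4) * (u \<bullet>c u) \<le> quad_form (id_tensor_P \<sigma>) u"
      using quad_form_id_tensor_P_ge assms(1) unfolding density2_def by fastforce
  qed
  then show ?thesis by simp
qed

lemma bell_state_entry:
  assumes "i < 4" "j < 4"
  shows "bell_state $$ (i,j) = (if (i = 0 \<or> i = 3) \<and> (j = 0 \<or> j = 3) then 1 / 2 else 0)"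
proof -
  have "complex_of_real (1 / sqrt 2) * cnj (complex_of_real (1 / sqrt 2)) = 1 / 2"
    by (simp flip: of_real_mult)
  then show ?thesis using assms by (simp add: bell_state_def bell_vec_def)
qed

lemma bell_state_carrier_mat: "bell_state \<in> carrier_mat 4 4"
  by (simp add: bell_state_def)

lemma quad_form_bell_state: "quad_form bell_state v = complex_of_real ((cmod (v $ 0 + v $ 3))\<^sup>2 / 2)"
proof -
  have "quad_form bell_state v = (v $ 0 + v $ 3) * cnj (v $ 0 + v $ 3) / 2"
    by (simp add: quad_form_def bell_state_carrier_mat[THEN carrier_matD(1)] sum_lessThan_4 bell_state_entry
        algebra_simps)
  also have "\<dots> = complex_of_real ((cmod (v $ 0 + v $ 3))\<^sup>2 / 2)"
    by (simp only: complex_norm_square of_real_divide of_real_numeral)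
  finally show ?thesis .
qed

lemma density2_bell_state: "density2 bell_state"
proof -
  have "\<forall>i<4. \<forall>j<4. bell_state $$ (j,i) = cnj (bell_state $$ (i,j))"
    by (simp add: bell_state_entry)
  moreover have "0 \<le> Re (quad_form bell_state v)" for v
    unfolding quad_form_bell_state by simp
  moreover have "(\<Sum>i<4. bell_state $$ (i,i)) = 1"
    by (simp add: sum_lessThan_4 bell_state_entry)
  ultimately show ?thesis
    using bell_state_carrier_mat
    unfolding density2_def positive_semidef_iff_quad_form bell_state_carrier_mat[THEN carrier_matD(1)] by blast
qed

lemma id_tensor_P_bell_state_entry:
  assumes "i < 4" "j < 4"
  shows "id_tensor_P bell_state $$ (i,j) =
    (if i = j then 1 / 4 else if (i = 0 \<and> j = 3) \<or> (i = 3 \<and> j = 0) then 1 / 2 else 0)"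
proof -
  have "i = 0 \<or> i = 1 \<or> i = 2 \<or> i = 3" "j = 0 \<or> j = 1 \<or> j = 2 \<or> j = 3"
    using assms by auto
  then show ?thesis by (elim disjE) (simp_all add: id_tensor_P_entry bell_state_entry)
qed

lemma eigenvector_id_tensor_P_bell_state:
  "eigenvector (id_tensor_P bell_state) (vec_of_list [1, 0, 0, -1]) (- 1 / 4)"
proof -
  let ?T = "id_tensor_P bell_state" and ?v = "vec_of_list [1, 0, 0, -1 :: complex]"
  have v: "?v \<in> carrier_vec 4"
    by (rule carrier_vecI) simp
  have "?T *\<^sub>v ?v = - 1 / 4 \<cdot>\<^sub>v ?v"
  proof (rule eq_vecI)
    fix i assume "i < dim_vec (- 1 / 4 \<cdot>\<^sub>v ?v)"
    then have i: "i < 4" by simp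
    have "(?T *\<^sub>v ?v) $ i = (\<Sum>j<4. ?T $$ (i,j) * ?v $ j)"
      by (rule mult_mat_vec_index_sum[OF id_tensor_P_carrier_mat v i])
    also have "\<dots> = (- 1 / 4 \<cdot>\<^sub>v ?v) $ i"
    proof -
      have "i = 0 \<or> i = 1 \<or> i = 2 \<or> i = 3" using i by auto
      then show ?thesis
        by (elim disjE) (simp_all add: sum_lessThan_4 id_tensor_P_bell_state_entry vec_of_list_index
            del: vec_of_list_Cons)
    qed
    finally show "(?T *\<^sub>v ?v) $ i = (- 1 / 4 \<cdot>\<^sub>v ?v) $ i" .
  qed (simp add: id_tensor_P_carrier_mat[THEN carrier_matD(1)])
  moreover have "?v \<noteq> 0\<^sub>v 4"
  proof
    assume "?v = 0\<^sub>v 4"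
    then have "?v $ 0 = 0" by simp
    then show False by (simp add: vec_of_list_index del: vec_of_list_Cons)
  qed
  ultimately show ?thesis
    using v id_tensor_P_carrier_mat[THEN carrier_matD(1)] unfolding eigenvector_def by metis
qed

theorem proposition1:
  shows "(\<forall>\<sigma> (l::complex). density2 \<sigma> \<longrightarrow> eigenvalue (id_tensor_P \<sigma>) l \<longrightarrow> l \<in> \<real> \<and> - 1 / 4 \<le> Re l)
    \<and> density2 bell_state \<and> eigenvalue (id_tensor_P bell_state) (- 1 / 4)"
proof (intro conjI allI impI)
  fix \<sigma> and l :: complex
  assume "density2 \<sigma>" "eigenvalue (id_tensor_P \<sigma>) l"
  then have "- 1 / 4 \<le> l" by (rule density2_id_tensor_P_eigenvalue_ge)
  then show "l \<in> \<real>" and "- 1 / 4 \<le> Re l"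
    by (simp_all add: less_eq_complex_def complex_is_Real_iff)
next
  show "density2 bell_state" by (rule density2_bell_state)
  show "eigenvalue (id_tensor_P bell_state) (- 1 / 4)"
    using eigenvector_id_tensor_P_bell_state unfolding eigenvalue_def by blast
qed

end
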